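(* Under the standing assumptions in the context, let $v\in S$ and for an integer $i$ let $A_v^i$ be the set of simple graphs on $[n]$ with degree sequence $\mathbf d$ in which $v$ has exactly $i$ neighbours in $S$. Then for integers $0\le i<d(v)$, $$\frac{|A_v^i|}{|A_v^{i+1}|}=\frac{i+1}{d(v)-i}\cdot\frac{d(\bar S)}{d(S)}\left(1+O\!\left(\frac{\Delta^2}{d(S)}\right)\right).$$
   Context: All asymptotics are as $n\to\infty$. For each $n$, $\mathbf d=(d(1),\dots,d(n))$ is a sequence of integers with $1\le d(1)\le\dots\le d(n)$ and even sum; $M=\sum_i d(i)$, $\Delta=d(n)$, $d(A)=\sum_{i\in A}d(i)$. $S\subseteq[n]$ is a given set, $\bar S=[n]\setminus S$, $\gamma=d(S)/M$. Standing assumptions: there is $\delta=\delta(n)\to0$ with $\delta^{-1}=O(\log\log M)$ and $\Delta^2(\gamma^{-1}\log M)^{12}\le\delta\,d(S)$, and a constant $c>0$ with $\gamma<1-c$. *)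

theory Defs
  imports "HOL-Analysis.Analysis" "HOL-Library.Landau_Symbols"
begin

definition simple_graphs :: "nat \<Rightarrow> nat set set set" where
  "simple_graphs n = {E. \<forall>e\<in>E. \<exists>x y. e = {x, y} \<and> x \<noteq> y \<and> x \<in> {1..n} \<and> y \<in> {1..n}}"

definition degree :: "nat set set \<Rightarrow> nat \<Rightarrow> nat" where
  "degree E x = card {e\<in>E. x \<in> e}"

definition graphs_with_degrees :: "nat \<Rightarrow> (nat \<Rightarrow> nat) \<Rightarrow> nat set set set" where
  "graphs_with_degrees n dd = {E \<in> simple_graphs n. \<forall>x\<in>{1..n}. degree E x = dd x}"

definition A_set :: "nat \<Rightarrow> (nat \<Rightarrow> nat) \<Rightarrow> nat set \<Rightarrow> nat \<Rightarrow> nat \<Rightarrow> nat set set set" where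
  "A_set n dd S v i = {E \<in> graphs_with_degrees n dd. card {u\<in>S. {u, v} \<in> E} = i}"

end

theory Submission
  imports Defs
begin

text \<open>A forward switching at v takes G \<in> A_v^i, an edge vu with u \<notin> S and an edge ab
  with a \<in> S, va and ub non-edges, and replaces vu, ab by va, ub; the result lies in A_v^(i+1),
  and the inverse operation is a backward switching. Every G \<in> A_v^i admits between
  (d(v) - i)(d(S) - 4\<Delta>^2) and (d(v) - i) d(S) forward switchings, since only edges ab near v or
  u are excluded; likewise every G \<in> A_v^(i+1) admits between (i + 1)(d(S') - 4\<Delta>^2) and
  (i + 1) d(S') backward switchings, S' the complement of S. Double counting gives the ratio.
  Both classes are nonempty: a maximal graph with degrees bounded by d has all degrees equal
  to d when M is large compared to \<Delta>^2 (a deficient graph could be enlarged by adding or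
  trading an edge), and the counting bounds carry positivity from one i to the next.\<close>

section \<open>Simple graphs and neighbourhoods\<close>

lemma simple_graph_edgeD:
  "G \<in> simple_graphs n \<Longrightarrow> {x, y} \<in> G \<Longrightarrow> x \<noteq> y \<and> x \<in> {1..n} \<and> y \<in> {1..n}"
  by (auto simp: simple_graphs_def doubleton_eq_iff)

lemma simple_graph_subset_Pow: "G \<in> simple_graphs n \<Longrightarrow> G \<subseteq> Pow {1..n}"
  by (auto simp: simple_graphs_def)

lemma finite_simple_graphs: "finite (simple_graphs n)"
  by (rule finite_subset[of _ "Pow (Pow {1..n})"]) (auto simp: simple_graphs_def)

lemma finite_simple_graph: "G \<in> simple_graphs n \<Longrightarrow> finite G"
  using finite_subset[OF simple_graph_subset_Pow] by blast

lemma insert_edge_simple_graph: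
  "G \<in> simple_graphs n \<Longrightarrow> x \<noteq> y \<Longrightarrow> x \<in> {1..n} \<Longrightarrow> y \<in> {1..n} \<Longrightarrow> insert {x, y} G \<in> simple_graphs n"
  by (auto simp: simple_graphs_def)

lemma simple_graph_Diff: "G \<in> simple_graphs n \<Longrightarrow> G - X \<in> simple_graphs n"
  by (auto simp: simple_graphs_def)

lemma graphs_with_degrees_simple: "G \<in> graphs_with_degrees n dd \<Longrightarrow> G \<in> simple_graphs n"
  by (simp add: graphs_with_degrees_def)

lemma finite_A_set: "finite (A_set n dd S v i)"
  by (rule finite_subset[OF _ finite_simple_graphs[of n]])
    (auto simp: A_set_def graphs_with_degrees_def)

definition neighbours :: "nat set set \<Rightarrow> nat \<Rightarrow> nat set" where
  "neighbours G x = {y. {x, y} \<in> G}"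

lemma neighbours_sym: "y \<in> neighbours G x \<longleftrightarrow> x \<in> neighbours G y"
  by (auto simp: neighbours_def insert_commute)

lemma neighbours_subset: "G \<in> simple_graphs n \<Longrightarrow> neighbours G x \<subseteq> {1..n}"
  using simple_graph_edgeD[of G n x] by (auto simp: neighbours_def)

lemma finite_neighbours: "G \<in> simple_graphs n \<Longrightarrow> finite (neighbours G x)"
  using finite_subset[OF neighbours_subset] by blast

lemma neighbours_outside: "G \<in> simple_graphs n \<Longrightarrow> x \<notin> {1..n} \<Longrightarrow> neighbours G x = {}"
  using simple_graph_edgeD[of G n x] by (auto simp: neighbours_def)

lemma card_neighbours:
  assumes "G \<in> simple_graphs n"
  shows "card (neighbours G x) = degree G x"
proof -
  have "bij_betw (\<lambda>y. {x, y}) (neighbours G x) {e \<in> G. x \<in> e}"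
  proof (rule bij_betwI')
    fix e assume "e \<in> {e \<in> G. x \<in> e}"
    with assms obtain p q where "e = {p, q}" "x \<in> {p, q}" "e \<in> G"
      by (auto simp: simple_graphs_def)
    then show "\<exists>y\<in>neighbours G x. e = {x, y}"
      by (auto simp: neighbours_def insert_commute)
  qed (auto simp: neighbours_def doubleton_eq_iff)
  then show ?thesis
    unfolding degree_def by (rule bij_betw_same_card)
qed

lemma card_neighbours_le:
  assumes "G \<in> simple_graphs n" and "\<forall>x\<in>{1..n}. degree G x \<le> D"
  shows "card (neighbours G z) \<le> D"
  using assms card_neighbours[OF assms(1), of z] neighbours_outside[OF assms(1), of z]
  by (cases "z \<in> {1..n}") auto

lemma card_neighbours_graphs_with_degrees:
  "G \<in> graphs_with_degrees n dd \<Longrightarrow> x \<in> {1..n} \<Longrightarrow> card (neighbours G x) = dd x"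
  by (auto simp: card_neighbours graphs_with_degrees_def)

lemma card_Sigma_neighbours:
  assumes "G \<in> simple_graphs n" and "finite X"
  shows "card (Sigma X (neighbours G)) = (\<Sum>x\<in>X. degree G x)"
  using assms by (simp add: finite_neighbours card_neighbours)

lemma card_Sigma_neighbours_le:
  assumes "G \<in> simple_graphs n" and "\<forall>x\<in>{1..n}. degree G x \<le> D" and "finite X"
  shows "card (Sigma X (neighbours G)) \<le> card X * D"
proof -
  have "card (Sigma X (neighbours G)) = (\<Sum>x\<in>X. card (neighbours G x))"
    using assms(1,3) by (simp add: finite_neighbours)
  also have "\<dots> \<le> card X * D"
    using sum_bounded_above[of X "\<lambda>x. card (neighbours G x)" D] card_neighbours_le[OF assms(1,2)]
    by simp
  finally show ?thesis .
qed

lemma card_Sigma_neighbours_avoiding: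
  assumes G: "G \<in> simple_graphs n" and deg: "\<forall>x\<in>{1..n}. degree G x \<le> D"
    and fin: "finite Z" "finite A" "finite B"
  shows "card (Sigma Z (neighbours G))
    \<le> card {(a, b) \<in> Sigma Z (neighbours G). a \<notin> A \<and> b \<notin> B} + (card A + card B) * D"
proof -
  let ?good = "{(a, b) \<in> Sigma Z (neighbours G). a \<notin> A \<and> b \<notin> B}"
  have fin_Sigma: "finite (Sigma X (neighbours G))" if "finite X" for X
    using that G by (simp add: finite_neighbours)
  have "Sigma Z (neighbours G)
      \<subseteq> ?good \<union> Sigma A (neighbours G) \<union> prod.swap ` Sigma B (neighbours G)"
    by (auto simp: neighbours_sym image_iff)
  then have "card (Sigma Z (neighbours G))
      \<le> card (?good \<union> Sigma A (neighbours G) \<union> prod.swap ` Sigma B (neighbours G))"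
    using fin fin_Sigma by (intro card_mono) (auto intro: finite_subset[OF _ fin_Sigma[OF fin(1)]])
  also have "\<dots> \<le> card ?good + card (Sigma A (neighbours G))
      + card (prod.swap ` Sigma B (neighbours G))"
    using card_Un_le[of "?good \<union> Sigma A (neighbours G)" "prod.swap ` Sigma B (neighbours G)"]
      card_Un_le[of ?good "Sigma A (neighbours G)"] by linarith
  also have "card (prod.swap ` Sigma B (neighbours G)) \<le> card (Sigma B (neighbours G))"
    by (rule card_image_le[OF fin_Sigma[OF fin(3)]])
  finally show ?thesis
    using card_Sigma_neighbours_le[OF G deg fin(2)] card_Sigma_neighbours_le[OF G deg fin(3)]
    by (simp add: algebra_simps)
qed

section \<open>Switchings\<close>

lemma degree_Diff_Un:
  assumes "finite G" "X \<subseteq> G" "Y \<inter> G = {}" "finite Y"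
  shows "degree (G - X \<union> Y) z + card {e \<in> X. z \<in> e} = degree G z + card {e \<in> Y. z \<in> e}"
proof -
  have fin_X: "finite X" using assms finite_subset by blast
  have eq: "{e \<in> G - X \<union> Y. z \<in> e} = ({e \<in> G. z \<in> e} - {e \<in> X. z \<in> e}) \<union> {e \<in> Y. z \<in> e}"
    by auto
  have "card ({e \<in> G. z \<in> e} - {e \<in> X. z \<in> e} \<union> {e \<in> Y. z \<in> e})
      = card ({e \<in> G. z \<in> e} - {e \<in> X. z \<in> e}) + card {e \<in> Y. z \<in> e}"
    using assms by (intro card_Un_disjoint) auto
  moreover have "card ({e \<in> G. z \<in> e} - {e \<in> X. z \<in> e}) = card {e \<in> G. z \<in> e} - card {e \<in> X. z \<in> e}"
    using assms fin_X by (intro card_Diff_subset) auto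
  moreover have "card {e \<in> X. z \<in> e} \<le> card {e \<in> G. z \<in> e}"
    using assms by (intro card_mono) auto
  ultimately show ?thesis
    unfolding degree_def eq by linarith
qed

lemma card_incident_edge: "card {e \<in> {{a, b}}. z \<in> e} = of_bool (z \<in> {a, b})"
proof -
  have "{e \<in> {{a, b}}. z \<in> e} = (if z \<in> {a, b} then {{a, b}} else {})"
    by auto
  then show ?thesis
    by simp
qed

lemma card_incident_two_edges:
  assumes "{p, q} \<noteq> {r, s}"
  shows "card {e \<in> {{p, q}, {r, s}}. z \<in> e} = of_bool (z \<in> {p, q}) + of_bool (z \<in> {r, s})"
proof -
  have "{e \<in> {{p, q}, {r, s}}. z \<in> e}
      = (if z \<in> {p, q} then {{p, q}} else {}) \<union> (if z \<in> {r, s} then {{r, s}} else {})"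
    by auto
  then show ?thesis
    using assms by auto
qed

definition switch :: "nat set set \<Rightarrow> nat \<Rightarrow> nat \<Rightarrow> nat \<Rightarrow> nat \<Rightarrow> nat set set" where
  "switch G v w x y = G - {{v, w}, {x, y}} \<union> {{v, x}, {w, y}}"

definition switch_partners :: "nat set set \<Rightarrow> nat \<Rightarrow> nat \<Rightarrow> nat set \<Rightarrow> (nat \<times> nat) set" where
  "switch_partners G v w X =
     {(x, y). x \<in> X \<and> x \<noteq> v \<and> {x, y} \<in> G \<and> y \<noteq> w \<and> {v, x} \<notin> G \<and> {w, y} \<notin> G}"

lemma switch_partners_distinct:
  assumes "G \<in> simple_graphs n" "{v, w} \<in> G" "(x, y) \<in> switch_partners G v w X"
  shows "distinct [v, w, x, y]"
  using assms simple_graph_edgeD[OF assms(1)]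
  by (auto simp: switch_partners_def insert_commute)

lemma switch_simple_graph:
  assumes G: "G \<in> simple_graphs n" and "{v, w} \<in> G" "(x, y) \<in> switch_partners G v w X"
  shows "switch G v w x y \<in> simple_graphs n"
  using assms simple_graph_edgeD[OF G, of v w] simple_graph_edgeD[OF G, of x y]
  by (auto simp: switch_def switch_partners_def simple_graphs_def)

lemma degree_switch:
  assumes G: "G \<in> simple_graphs n" and vw: "{v, w} \<in> G" and xy: "(x, y) \<in> switch_partners G v w X"
  shows "degree (switch G v w x y) z = degree G z"
proof -
  have dist: "distinct [v, w, x, y]"
    by (rule switch_partners_distinct[OF G vw xy])
  have "degree (switch G v w x y) z + card {e \<in> {{v, w}, {x, y}}. z \<in> e}
      = degree G z + card {e \<in> {{v, x}, {w, y}}. z \<in> e}"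
    unfolding switch_def using xy vw finite_simple_graph[OF G]
    by (intro degree_Diff_Un) (auto simp: switch_partners_def)
  moreover have "card {e \<in> {{v, w}, {x, y}}. z \<in> e} = card {e \<in> {{v, x}, {w, y}}. z \<in> e}"
    using dist by (subst (1 2) card_incident_two_edges) (auto simp: doubleton_eq_iff)
  ultimately show ?thesis
    by simp
qed

lemma neighbours_switch:
  assumes "distinct [v, w, x, y]"
  shows "neighbours (switch G v w x y) v = insert x (neighbours G v - {w})"
  using assms by (auto simp: neighbours_def switch_def doubleton_eq_iff)

lemma switch_switch:
  assumes "{v, w} \<in> G" "(x, y) \<in> switch_partners G v w X"
  shows "switch (switch G v w x y) v x w y = G"
  using assms by (auto simp: switch_def switch_partners_def)

lemma switch_partners_switch:
  assumes G: "G \<in> simple_graphs n" and vw: "{v, w} \<in> G" and xy: "(x, y) \<in> switch_partners G v w X"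
    and "w \<in> W"
  shows "(w, y) \<in> switch_partners (switch G v w x y) v x W"
  using assms switch_partners_distinct[OF G vw xy]
  by (auto simp: switch_partners_def switch_def doubleton_eq_iff)

lemma switch_graphs_with_degrees:
  assumes "G \<in> graphs_with_degrees n dd" "{v, w} \<in> G" "(x, y) \<in> switch_partners G v w X"
  shows "switch G v w x y \<in> graphs_with_degrees n dd"
  using assms by (auto simp: graphs_with_degrees_def switch_simple_graph degree_switch)

text \<open>(w, x, y) encodes the switching at v that replaces the edges vw, xy (w \<in> W, x \<in> X)
  by vx, wy.\<close>
definition switchings :: "nat set set \<Rightarrow> nat \<Rightarrow> nat set \<Rightarrow> nat set \<Rightarrow> (nat \<times> nat \<times> nat) set" where
  "switchings G v W X = Sigma (W \<inter> neighbours G v) (\<lambda>w. switch_partners G v w X)"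

definition flip_switching ::
    "nat \<Rightarrow> nat set set \<times> nat \<times> nat \<times> nat \<Rightarrow> nat set set \<times> nat \<times> nat \<times> nat" where
  "flip_switching v = (\<lambda>(G, w, x, y). (switch G v w x y, x, w, y))"

lemma switchings_switch:
  assumes G: "G \<in> simple_graphs n" and s: "(w, x, y) \<in> switchings G v W X"
  shows "(x, w, y) \<in> switchings (switch G v w x y) v X W"
    and "switch (switch G v w x y) v x w y = G"
proof -
  have vw: "{v, w} \<in> G" and xy: "(x, y) \<in> switch_partners G v w X" and "w \<in> W"
    using s by (auto simp: switchings_def neighbours_def)
  then show "(x, w, y) \<in> switchings (switch G v w x y) v X W"
    using switch_partners_switch[OF G vw xy]
      neighbours_switch[OF switch_partners_distinct[OF G vw xy]]
    by (auto simp: switchings_def switch_partners_def)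
  show "switch (switch G v w x y) v x w y = G"
    by (rule switch_switch[OF vw xy])
qed

lemma Collect_adjacent_eq_Int_neighbours: "{u \<in> S. {u, v} \<in> G} = S \<inter> neighbours G v"
  by (auto simp: neighbours_def insert_commute)

lemma switch_A_set_Suc:
  assumes G: "G \<in> A_set n dd S v i" and s: "(w, x, y) \<in> switchings G v ({1..n} - S) S"
  shows "switch G v w x y \<in> A_set n dd S v (Suc i)"
proof -
  have Gd: "G \<in> graphs_with_degrees n dd" and card_i: "card (S \<inter> neighbours G v) = i"
    using G by (auto simp: A_set_def Collect_adjacent_eq_Int_neighbours)
  have G_simple: "G \<in> simple_graphs n"
    by (rule graphs_with_degrees_simple[OF Gd])
  have vw: "{v, w} \<in> G" and "w \<notin> S" and xy: "(x, y) \<in> switch_partners G v w S"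
    using s by (auto simp: switchings_def neighbours_def)
  then have "S \<inter> neighbours (switch G v w x y) v = insert x (S \<inter> neighbours G v)"
    and "x \<notin> neighbours G v"
    using neighbours_switch[OF switch_partners_distinct[OF G_simple vw xy]]
    by (auto simp: switch_partners_def neighbours_def)
  then have "card (S \<inter> neighbours (switch G v w x y) v) = Suc i"
    using card_i finite_neighbours[OF G_simple] by simp
  then show ?thesis
    using switch_graphs_with_degrees[OF Gd vw xy] by (simp add: A_set_def Collect_adjacent_eq_Int_neighbours)
qed

lemma switch_A_set_pred:
  assumes G: "G \<in> A_set n dd S v (Suc i)" and s: "(w, x, y) \<in> switchings G v S ({1..n} - S)"
  shows "switch G v w x y \<in> A_set n dd S v i"
proof -
  have Gd: "G \<in> graphs_with_degrees n dd" and card_i: "card (S \<inter> neighbours G v) = Suc i"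
    using G by (auto simp: A_set_def Collect_adjacent_eq_Int_neighbours)
  have G_simple: "G \<in> simple_graphs n"
    by (rule graphs_with_degrees_simple[OF Gd])
  have vw: "{v, w} \<in> G" and w: "w \<in> S \<inter> neighbours G v"
    and xy: "(x, y) \<in> switch_partners G v w ({1..n} - S)"
    using s by (auto simp: switchings_def neighbours_def)
  then have "S \<inter> neighbours (switch G v w x y) v = (S \<inter> neighbours G v) - {w}"
    using neighbours_switch[OF switch_partners_distinct[OF G_simple vw xy]]
    by (auto simp: switch_partners_def)
  then have "card (S \<inter> neighbours (switch G v w x y) v) = i"
    using card_i w finite_neighbours[OF G_simple] by simp
  then show ?thesis
    using switch_graphs_with_degrees[OF Gd vw xy] by (simp add: A_set_def Collect_adjacent_eq_Int_neighbours)
qed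

lemma switch_partners_subset_Sigma: "switch_partners G v w X \<subseteq> Sigma X (neighbours G)"
  by (auto simp: switch_partners_def neighbours_def)

lemma finite_switch_partners:
  assumes "G \<in> simple_graphs n" "finite X"
  shows "finite (switch_partners G v w X)"
  by (rule finite_subset[OF switch_partners_subset_Sigma]) (use assms finite_neighbours in blast)

lemma finite_switchings:
  assumes "G \<in> simple_graphs n" "finite X"
  shows "finite (switchings G v W X)"
  using assms by (simp add: switchings_def finite_neighbours finite_switch_partners)

text \<open>Undoing a switching is again a switching, so flipping is an involution exchanging
  forward switchings out of A_v^i and backward switchings out of A_v^(i+1).\<close>
lemma sum_card_switchings_eq:
  assumes S: "S \<subseteq> {1..n}"
  shows "(\<Sum>G\<in>A_set n dd S v i. card (switchings G v ({1..n} - S) S))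
       = (\<Sum>G\<in>A_set n dd S v (Suc i). card (switchings G v S ({1..n} - S)))"
proof -
  define P where "P = Sigma (A_set n dd S v i) (\<lambda>G. switchings G v ({1..n} - S) S)"
  define Q where "Q = Sigma (A_set n dd S v (Suc i)) (\<lambda>G. switchings G v S ({1..n} - S))"
  have simple: "G \<in> simple_graphs n" if "G \<in> A_set n dd S v j" for G j
    using that by (simp add: A_set_def graphs_with_degrees_def)
  have "bij_betw (flip_switching v) P Q"
  proof (rule bij_betw_byWitness[where f' = "flip_switching v"])
    show "\<forall>p\<in>P. flip_switching v (flip_switching v p) = p"
      using switchings_switch(2)[OF simple] by (auto simp: P_def flip_switching_def)
    show "\<forall>q\<in>Q. flip_switching v (flip_switching v q) = q"
      using switchings_switch(2)[OF simple] by (auto simp: Q_def flip_switching_def)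
    show "flip_switching v ` P \<subseteq> Q"
      using switch_A_set_Suc switchings_switch(1)[OF simple]
      by (auto simp: P_def Q_def flip_switching_def)
    show "flip_switching v ` Q \<subseteq> P"
      using switch_A_set_pred switchings_switch(1)[OF simple]
      by (auto simp: P_def Q_def flip_switching_def)
  qed
  then have "card P = card Q"
    by (rule bij_betw_same_card)
  moreover have "finite S"
    using S finite_subset by blast
  ultimately show ?thesis
    unfolding P_def Q_def using simple finite_A_set
    by (subst (asm) (1 2) card_SigmaI) (auto intro: finite_switchings)
qed

lemma card_switch_partners_le:
  assumes "G \<in> simple_graphs n" "finite X"
  shows "card (switch_partners G v w X) \<le> (\<Sum>x\<in>X. degree G x)"
proof -
  have "card (switch_partners G v w X) \<le> card (Sigma X (neighbours G))"
    using assms switch_partners_subset_Sigma by (intro card_mono) (auto simp: finite_neighbours)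
  then show ?thesis
    using card_Sigma_neighbours[OF assms] by simp
qed

lemma card_switch_partners_ge:
  assumes G: "G \<in> simple_graphs n" and deg: "\<forall>x\<in>{1..n}. degree G x \<le> D" and X: "finite X"
  shows "(\<Sum>x\<in>X. degree G x) \<le> card (switch_partners G v w X) + 4 * D\<^sup>2"
proof -
  let ?A = "insert v (neighbours G v)" and ?B = "insert w (neighbours G w)"
  have "{(a, b) \<in> Sigma X (neighbours G). a \<notin> ?A \<and> b \<notin> ?B} = switch_partners G v w X"
    by (auto simp: switch_partners_def neighbours_def insert_commute)
  then have "(\<Sum>x\<in>X. degree G x) \<le> card (switch_partners G v w X) + (card ?A + card ?B) * D"
    using card_Sigma_neighbours_avoiding[OF G deg X, of ?A ?B] card_Sigma_neighbours[OF G X]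
    by (simp add: finite_neighbours[OF G])
  moreover have "card ?A \<le> D + 1" "card ?B \<le> D + 1"
    by (intro card_insert_le_m1; simp add: card_neighbours_le[OF G deg])+
  then have "(card ?A + card ?B) * D \<le> (2 * D + 2) * D"
    by (intro mult_right_mono) simp_all
  also have "\<dots> \<le> 4 * D\<^sup>2"
    by (cases D) (simp_all add: power2_eq_square algebra_simps)
  finally show ?thesis
    by linarith
qed

lemma card_switchings_bounds:
  assumes G: "G \<in> graphs_with_degrees n dd" and dd_le: "\<forall>x\<in>{1..n}. dd x \<le> D"
    and X: "X \<subseteq> {1..n}"
  shows "card (W \<inter> neighbours G v) * sum dd X
           \<le> card (switchings G v W X) + card (W \<inter> neighbours G v) * (4 * D\<^sup>2)"
    and "card (switchings G v W X) \<le> card (W \<inter> neighbours G v) * sum dd X"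
proof -
  have G_simple: "G \<in> simple_graphs n"
    by (rule graphs_with_degrees_simple[OF G])
  have fin_X: "finite X"
    using X finite_subset by blast
  have deg: "\<forall>x\<in>{1..n}. degree G x \<le> D"
    using G dd_le by (simp add: graphs_with_degrees_def)
  have sum_deg: "(\<Sum>x\<in>X. degree G x) = sum dd X"
    using G X by (intro sum.cong) (auto simp: graphs_with_degrees_def)
  have card_sw: "card (switchings G v W X)
      = (\<Sum>w\<in>W \<inter> neighbours G v. card (switch_partners G v w X))"
    unfolding switchings_def
    by (intro card_SigmaI)
      (simp_all add: finite_neighbours[OF G_simple] finite_switch_partners[OF G_simple fin_X])
  show "card (W \<inter> neighbours G v) * sum dd X
           \<le> card (switchings G v W X) + card (W \<inter> neighbours G v) * (4 * D\<^sup>2)"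
    unfolding card_sw
    using sum_mono[of "W \<inter> neighbours G v" "\<lambda>_. sum dd X"
        "\<lambda>w. card (switch_partners G v w X) + 4 * D\<^sup>2"]
      card_switch_partners_ge[OF G_simple deg fin_X] sum_deg
    by (simp add: sum.distrib algebra_simps)
  show "card (switchings G v W X) \<le> card (W \<inter> neighbours G v) * sum dd X"
    unfolding card_sw
    using sum_bounded_above[of "W \<inter> neighbours G v" "\<lambda>w. card (switch_partners G v w X)" "sum dd X"]
      card_switch_partners_le[OF G_simple fin_X] sum_deg
    by simp
qed

lemma card_neighbours_A_set:
  assumes G: "G \<in> A_set n dd S v i" and v: "v \<in> {1..n}"
  shows "card (S \<inter> neighbours G v) = i"
    and "card (({1..n} - S) \<inter> neighbours G v) = dd v - i"
proof -
  have Gd: "G \<in> graphs_with_degrees n dd"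
    using G by (simp add: A_set_def)
  show card_S: "card (S \<inter> neighbours G v) = i"
    using G by (simp add: A_set_def Collect_adjacent_eq_Int_neighbours)
  have "({1..n} - S) \<inter> neighbours G v = neighbours G v - S \<inter> neighbours G v"
    using neighbours_subset[OF graphs_with_degrees_simple[OF Gd]] by blast
  then show "card (({1..n} - S) \<inter> neighbours G v) = dd v - i"
    using card_S card_neighbours_graphs_with_degrees[OF Gd v]
      finite_neighbours[OF graphs_with_degrees_simple[OF Gd]]
    by (simp add: card_Diff_subset)
qed

lemma card_A_set_switching_bounds:
  assumes S: "S \<subseteq> {1..n}" and v: "v \<in> {1..n}" and dd_le: "\<forall>x\<in>{1..n}. dd x \<le> D"
  defines "a \<equiv> \<lambda>j. card (A_set n dd S v j)"
  shows "a i * ((dd v - i) * sum dd S)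
           \<le> a (Suc i) * (Suc i * sum dd ({1..n} - S)) + a i * ((dd v - i) * (4 * D\<^sup>2))"
    and "a (Suc i) * (Suc i * sum dd ({1..n} - S))
           \<le> a i * ((dd v - i) * sum dd S) + a (Suc i) * (Suc i * (4 * D\<^sup>2))"
proof -
  let ?T = "{1..n} - S"
  define N where "N = (\<Sum>G\<in>A_set n dd S v i. card (switchings G v ?T S))"
  have N_alt: "N = (\<Sum>G\<in>A_set n dd S v (Suc i). card (switchings G v S ?T))"
    unfolding N_def by (rule sum_card_switchings_eq[OF S])
  have Gd: "G \<in> graphs_with_degrees n dd" if "G \<in> A_set n dd S v j" for G j
    using that by (simp add: A_set_def)
  have fwd_lower: "(dd v - i) * sum dd S \<le> card (switchings G v ?T S) + (dd v - i) * (4 * D\<^sup>2)"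
    if "G \<in> A_set n dd S v i" for G
    using card_switchings_bounds(1)[OF Gd[OF that] dd_le S, where W = ?T and v = v]
      card_neighbours_A_set(2)[OF that v] by simp
  have fwd_upper: "card (switchings G v ?T S) \<le> (dd v - i) * sum dd S"
    if "G \<in> A_set n dd S v i" for G
    using card_switchings_bounds(2)[OF Gd[OF that] dd_le S, where W = ?T and v = v]
      card_neighbours_A_set(2)[OF that v] by simp
  have bwd_lower: "Suc i * sum dd ?T \<le> card (switchings G v S ?T) + Suc i * (4 * D\<^sup>2)"
    if "G \<in> A_set n dd S v (Suc i)" for G
    using card_switchings_bounds(1)[OF Gd[OF that] dd_le Diff_subset, where W = S and v = v]
      card_neighbours_A_set(1)[OF that v] by simp
  have bwd_upper: "card (switchings G v S ?T) \<le> Suc i * sum dd ?T"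
    if "G \<in> A_set n dd S v (Suc i)" for G
    using card_switchings_bounds(2)[OF Gd[OF that] dd_le Diff_subset, where W = S and v = v]
      card_neighbours_A_set(1)[OF that v] by simp
  have "a i * ((dd v - i) * sum dd S)
      \<le> (\<Sum>G\<in>A_set n dd S v i. card (switchings G v ?T S) + (dd v - i) * (4 * D\<^sup>2))"
    unfolding a_def using sum_bounded_below[OF fwd_lower] by simp
  also have "\<dots> = N + a i * ((dd v - i) * (4 * D\<^sup>2))"
    unfolding N_def a_def by (simp add: sum.distrib)
  finally have "a i * ((dd v - i) * sum dd S) \<le> N + a i * ((dd v - i) * (4 * D\<^sup>2))" .
  moreover have "N \<le> a (Suc i) * (Suc i * sum dd ?T)"
    unfolding N_alt a_def using sum_bounded_above[OF bwd_upper] by simp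
  ultimately show "a i * ((dd v - i) * sum dd S)
           \<le> a (Suc i) * (Suc i * sum dd ?T) + a i * ((dd v - i) * (4 * D\<^sup>2))"
    by linarith
  have "a (Suc i) * (Suc i * sum dd ?T)
      \<le> (\<Sum>G\<in>A_set n dd S v (Suc i). card (switchings G v S ?T) + Suc i * (4 * D\<^sup>2))"
    unfolding a_def using sum_bounded_below[OF bwd_lower] by simp
  also have "\<dots> = N + a (Suc i) * (Suc i * (4 * D\<^sup>2))"
    unfolding N_alt a_def by (simp add: sum.distrib)
  finally have "a (Suc i) * (Suc i * sum dd ?T) \<le> N + a (Suc i) * (Suc i * (4 * D\<^sup>2))" .
  moreover have "N \<le> a i * ((dd v - i) * sum dd S)"
    unfolding N_def a_def using sum_bounded_above[OF fwd_upper] by simp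
  ultimately show "a (Suc i) * (Suc i * sum dd ?T)
           \<le> a i * ((dd v - i) * sum dd S) + a (Suc i) * (Suc i * (4 * D\<^sup>2))"
    by linarith
qed

section \<open>Graphical degree sequences\<close>

lemma sum_degree_eq_twice_card:
  assumes G: "G \<in> simple_graphs n"
  shows "(\<Sum>x\<in>{1..n}. degree G x) = 2 * card G"
proof -
  have "(\<Sum>x\<in>{1..n}. degree G x) = (\<Sum>x\<in>{1..n}. \<Sum>e\<in>G. of_bool (x \<in> e))"
    unfolding degree_def using finite_simple_graph[OF G]
    by (simp add: sum.inter_filter[symmetric] of_bool_def)
  also have "\<dots> = (\<Sum>e\<in>G. \<Sum>x\<in>{1..n}. of_bool (x \<in> e))"
    by (rule sum.swap)
  also have "\<dots> = (\<Sum>e\<in>G. 2)"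
  proof (rule sum.cong[OF refl])
    fix e assume "e \<in> G"
    then obtain p q where e: "e = {p, q}" "p \<noteq> q" "p \<in> {1..n}" "q \<in> {1..n}"
      using G by (auto simp: simple_graphs_def)
    then have "{1..n} \<inter> e = {p, q}"
      by auto
    then show "(\<Sum>x\<in>{1..n}. of_bool (x \<in> e)) = (2::nat)"
      using e(2) by (simp add: sum.inter_filter[symmetric] of_bool_def Int_def)
  qed
  finally show ?thesis
    by simp
qed

lemma degree_insert_edge:
  assumes "finite G" "{x, y} \<notin> G" "x \<noteq> y"
  shows "degree (insert {x, y} G) z = degree G z + of_bool (z = x) + of_bool (z = y)"
  using degree_Diff_Un[of G "{}" "{{x, y}}" z] assms card_incident_edge[of x y z]
  by auto

lemma degree_trade_edge:
  assumes "finite G" "{a, b} \<in> G" "{x, a} \<notin> G" "{y, b} \<notin> G" "a \<noteq> b" "a \<notin> {x, y}" "b \<notin> {x, y}"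
  shows "degree (G - {{a, b}} \<union> {{x, a}, {y, b}}) z
    = degree G z + of_bool (z = x) + of_bool (z = y)"
proof -
  have ne: "{x, a} \<noteq> {y, b}"
    using assms by (auto simp: doubleton_eq_iff)
  have "degree (G - {{a, b}} \<union> {{x, a}, {y, b}}) z + card {e \<in> {{a, b}}. z \<in> e}
      = degree G z + card {e \<in> {{x, a}, {y, b}}. z \<in> e}"
    using assms by (intro degree_Diff_Un) auto
  then have "degree (G - {{a, b}} \<union> {{x, a}, {y, b}}) z + of_bool (z \<in> {a, b})
      = degree G z + (of_bool (z \<in> {x, a}) + of_bool (z \<in> {y, b}))"
    by (simp only: card_incident_edge card_incident_two_edges[OF ne])
  then show ?thesis
    using assms by (auto simp: of_bool_def split: if_splits)
qed

definition degree_bounded_graphs :: "nat \<Rightarrow> (nat \<Rightarrow> nat) \<Rightarrow> nat set set set" where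
  "degree_bounded_graphs n dd = {G \<in> simple_graphs n. \<forall>x\<in>{1..n}. degree G x \<le> dd x}"

definition max_degree_bounded_graph :: "nat \<Rightarrow> (nat \<Rightarrow> nat) \<Rightarrow> nat set set \<Rightarrow> bool" where
  "max_degree_bounded_graph n dd G \<longleftrightarrow>
     G \<in> degree_bounded_graphs n dd \<and> (\<forall>G'\<in>degree_bounded_graphs n dd. card G' \<le> card G)"

lemma ex_max_degree_bounded_graph: "\<exists>G. max_degree_bounded_graph n dd G"
proof -
  have fin: "finite (degree_bounded_graphs n dd)"
    by (rule finite_subset[OF _ finite_simple_graphs]) (auto simp: degree_bounded_graphs_def)
  have "{} \<in> degree_bounded_graphs n dd"
    by (simp add: degree_bounded_graphs_def simple_graphs_def degree_def)
  then have "Max (card ` degree_bounded_graphs n dd) \<in> card ` degree_bounded_graphs n dd"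
    using fin by (intro Max_in) auto
  then obtain G where "G \<in> degree_bounded_graphs n dd"
    "card G = Max (card ` degree_bounded_graphs n dd)"
    by auto
  then show ?thesis
    using fin by (auto simp: max_degree_bounded_graph_def)
qed

text \<open>For x = y the room condition demands deficiency at least 2 at x: trading ab for xa, xb
  raises the degree of x by two.\<close>
lemma max_degree_bounded_graph_no_room:
  assumes max: "max_degree_bounded_graph n dd G"
    and room: "\<forall>z\<in>{1..n}. degree G z + of_bool (z = x) + of_bool (z = y) \<le> dd z"
    and x: "x \<in> {1..n}" and y: "y \<in> {1..n}"
  shows "x \<noteq> y \<Longrightarrow> {x, y} \<in> G"
    and "{a, b} \<in> G \<Longrightarrow> a \<notin> {x, y} \<Longrightarrow> b \<notin> {x, y} \<Longrightarrow> {x, a} \<in> G \<or> {y, b} \<in> G"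
proof -
  have G: "G \<in> simple_graphs n" and fin: "finite G"
    using max finite_simple_graph
    by (auto simp: max_degree_bounded_graph_def degree_bounded_graphs_def)
  have bigger: False if "G' \<in> simple_graphs n" "card G' = Suc (card G)"
    "\<And>z. degree G' z = degree G z + of_bool (z = x) + of_bool (z = y)" for G'
  proof -
    have "G' \<in> degree_bounded_graphs n dd"
      using that room by (simp add: degree_bounded_graphs_def)
    then show False
      using max that(2) by (auto simp: max_degree_bounded_graph_def)
  qed
  show "{x, y} \<in> G" if xy: "x \<noteq> y"
  proof (rule ccontr)
    assume "{x, y} \<notin> G"
    then show False
      using bigger[of "insert {x, y} G"] degree_insert_edge[OF fin _ xy]
        insert_edge_simple_graph[OF G xy x y] fin
      by simp
  qed
  show "{x, a} \<in> G \<or> {y, b} \<in> G" if ab: "{a, b} \<in> G" and a: "a \<notin> {x, y}" and b: "b \<notin> {x, y}"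
  proof (rule ccontr)
    assume "\<not> ({x, a} \<in> G \<or> {y, b} \<in> G)"
    then have xa: "{x, a} \<notin> G" and yb: "{y, b} \<notin> G"
      by auto
    have "a \<noteq> b" "a \<in> {1..n}" "b \<in> {1..n}"
      using simple_graph_edgeD[OF G ab] by auto
    moreover have "{x, a} \<noteq> {y, b}"
      using a \<open>a \<noteq> b\<close> by (auto simp: doubleton_eq_iff)
    moreover have "card (G - {{a, b}}) = card G - 1" "card G > 0"
      using ab fin by (auto simp: card_gt_0_iff)
    ultimately show False
      using bigger[of "G - {{a, b}} \<union> {{x, a}, {y, b}}"] degree_trade_edge[OF fin ab xa yb]
        a b x y xa yb fin
        insert_edge_simple_graph[OF insert_edge_simple_graph[OF simple_graph_Diff[OF G]]]
      by auto
  qed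
qed

lemma max_degree_bounded_graphD:
  assumes "max_degree_bounded_graph n dd G"
  shows "G \<in> simple_graphs n" and "\<forall>x\<in>{1..n}. degree G x \<le> dd x"
  using assms by (auto simp: max_degree_bounded_graph_def degree_bounded_graphs_def)

text \<open>The deficient vertices of a maximal graph are pairwise adjacent.\<close>
lemma card_deficient_le:
  assumes max: "max_degree_bounded_graph n dd G" and dd_le: "\<forall>x\<in>{1..n}. dd x \<le> D"
  shows "card {x \<in> {1..n}. degree G x < dd x} \<le> D"
proof (cases "{x \<in> {1..n}. degree G x < dd x} = {}")
  case False
  then obtain x0 where x0: "x0 \<in> {1..n}" "degree G x0 < dd x0"
    by blast
  note G = max_degree_bounded_graphD[OF max]
  have "{x \<in> {1..n}. degree G x < dd x} - {x0} \<subseteq> neighbours G x0"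
  proof
    fix z assume z: "z \<in> {x \<in> {1..n}. degree G x < dd x} - {x0}"
    have "\<forall>w\<in>{1..n}. degree G w + of_bool (w = x0) + of_bool (w = z) \<le> dd w"
      using G(2) x0 z by (auto simp: of_bool_def)
    then have "{x0, z} \<in> G"
      using max_degree_bounded_graph_no_room(1)[OF max _ x0(1)] z by blast
    then show "z \<in> neighbours G x0"
      by (simp add: neighbours_def)
  qed
  then have "card ({x \<in> {1..n}. degree G x < dd x} - {x0}) \<le> card (neighbours G x0)"
    by (intro card_mono finite_neighbours[OF G(1)])
  moreover have "card (neighbours G x0) < D"
    using x0 dd_le card_neighbours[OF G(1)] by fastforce
  ultimately show ?thesis
    by (simp add: card_Diff_singleton_if split: if_splits)
qed (metis card.empty le0)

lemma sum_le_sum_degree_max: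
  assumes max: "max_degree_bounded_graph n dd G" and dd_le: "\<forall>x\<in>{1..n}. dd x \<le> D"
  shows "sum dd {1..n} \<le> (\<Sum>x\<in>{1..n}. degree G x) + D\<^sup>2"
proof -
  let ?Def = "{x \<in> {1..n}. degree G x < dd x}"
  note G = max_degree_bounded_graphD[OF max]
  have "sum dd {1..n} = (\<Sum>x\<in>{1..n}. degree G x) + (\<Sum>x\<in>{1..n}. dd x - degree G x)"
    using G(2) by (simp add: sum.distrib[symmetric])
  also have "(\<Sum>x\<in>{1..n}. dd x - degree G x) = (\<Sum>x\<in>?Def. dd x - degree G x)"
    by (rule sum.mono_neutral_right) auto
  also have "\<dots> \<le> card ?Def * D"
    using dd_le
    by (intro sum_bounded_above[of _ _ D, simplified]) (auto intro: le_trans[OF diff_le_self])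
  also have "\<dots> \<le> D\<^sup>2"
    using card_deficient_le[OF max dd_le] by (simp add: power2_eq_square)
  finally show ?thesis
    by simp
qed

text \<open>If a single vertex is deficient, its deficiency is the total one, which is even.\<close>
lemma max_degree_bounded_graph_room:
  assumes max: "max_degree_bounded_graph n dd G" and even: "even (sum dd {1..n})"
    and unsat: "\<not> (\<forall>x\<in>{1..n}. degree G x = dd x)"
  obtains x y where "x \<in> {1..n}" "y \<in> {1..n}"
    "\<forall>z\<in>{1..n}. degree G z + of_bool (z = x) + of_bool (z = y) \<le> dd z"
proof -
  let ?Def = "{x \<in> {1..n}. degree G x < dd x}"
  note G = max_degree_bounded_graphD[OF max]
  obtain x0 where "x0 \<in> {1..n}" "degree G x0 \<noteq> dd x0"
    using unsat by blast
  then have x0: "x0 \<in> ?Def"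
    using G(2) le_neq_implies_less by blast
  show ?thesis
  proof (cases "\<exists>y\<in>?Def. y \<noteq> x0")
    case True
    then obtain y where "y \<in> ?Def" "y \<noteq> x0"
      by blast
    then show ?thesis
      using that[of x0 y] x0 G(2) by (auto simp: of_bool_def)
  next
    case False
    then have Def: "?Def = {x0}"
      using x0 by blast
    have "sum dd {1..n} = (\<Sum>x\<in>{1..n}. degree G x) + (\<Sum>x\<in>{1..n}. dd x - degree G x)"
      using G(2) by (simp add: sum.distrib[symmetric])
    also have "(\<Sum>x\<in>{1..n}. dd x - degree G x) = (\<Sum>x\<in>?Def. dd x - degree G x)"
      by (rule sum.mono_neutral_right) auto
    finally have "even (dd x0 - degree G x0)"
      using even sum_degree_eq_twice_card[OF G(1)] Def by simp
    moreover have "degree G x0 < dd x0"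
      using x0 by simp
    ultimately have "degree G x0 + 2 \<le> dd x0"
      by presburger
    then show ?thesis
      using that[of x0 x0] x0 G(2) by (auto simp: of_bool_def)
  qed
qed

lemma graphs_with_degrees_nonempty:
  assumes dd_le: "\<forall>x\<in>{1..n}. dd x \<le> D" and even: "even (sum dd {1..n})"
    and big: "3 * D\<^sup>2 + 4 * D < sum dd {1..n}"
  shows "graphs_with_degrees n dd \<noteq> {}"
proof -
  obtain G where max: "max_degree_bounded_graph n dd G"
    using ex_max_degree_bounded_graph by blast
  note G = max_degree_bounded_graphD[OF max]
  have deg: "\<forall>x\<in>{1..n}. degree G x \<le> D"
    using G(2) dd_le by fastforce
  have "\<forall>x\<in>{1..n}. degree G x = dd x"
  proof (rule ccontr)
    assume "\<not> (\<forall>x\<in>{1..n}. degree G x = dd x)"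
    then obtain x y where xy: "x \<in> {1..n}" "y \<in> {1..n}"
      and room: "\<forall>z\<in>{1..n}. degree G z + of_bool (z = x) + of_bool (z = y) \<le> dd z"
      using max_degree_bounded_graph_room[OF max even] by blast
    let ?A = "{x, y} \<union> neighbours G x" and ?B = "{x, y} \<union> neighbours G y"
    have "card {x, y} \<le> 2"
      by (cases "x = y") auto
    then have "card ?A \<le> D + 2" "card ?B \<le> D + 2"
      using card_Un_le[of "{x, y}" "neighbours G x"] card_Un_le[of "{x, y}" "neighbours G y"]
        card_neighbours_le[OF G(1) deg, of x] card_neighbours_le[OF G(1) deg, of y]
      by linarith+
    then have "(card ?A + card ?B) * D \<le> (2 * D + 4) * D"
      by (intro mult_right_mono) simp_all
    also have "\<dots> = 2 * D\<^sup>2 + 4 * D"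
      by (simp add: power2_eq_square algebra_simps)
    finally have "(card ?A + card ?B) * D \<le> 2 * D\<^sup>2 + 4 * D" .
    moreover have "card (Sigma {1..n} (neighbours G))
        \<le> card {(a, b) \<in> Sigma {1..n} (neighbours G). a \<notin> ?A \<and> b \<notin> ?B} + (card ?A + card ?B) * D"
      by (rule card_Sigma_neighbours_avoiding[OF G(1) deg])
        (simp_all add: finite_neighbours[OF G(1)])
    moreover have "sum dd {1..n} \<le> card (Sigma {1..n} (neighbours G)) + D\<^sup>2"
      using sum_le_sum_degree_max[OF max dd_le] card_Sigma_neighbours[OF G(1)] by simp
    ultimately have "card {(a, b) \<in> Sigma {1..n} (neighbours G). a \<notin> ?A \<and> b \<notin> ?B} > 0"
      using big by linarith
    then obtain a b where "{a, b} \<in> G" "a \<notin> {x, y}" "b \<notin> {x, y}" "{x, a} \<notin> G" "{y, b} \<notin> G"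
      unfolding card_gt_0_iff by (auto simp: neighbours_def insert_commute)
    then show False
      using max_degree_bounded_graph_no_room(2)[OF max room xy] by blast
  qed
  then show ?thesis
    using G(1) by (auto simp: graphs_with_degrees_def)
qed

section \<open>The ratio of consecutive classes\<close>

lemma ratio_estimate:
  fixes a b k j s t e c :: real
  assumes pos: "0 \<le> a" "0 < b" "0 < k" "0 < j" "0 < s" "0 < c" "0 \<le> e"
    and small: "2 * e \<le> s" "c * s \<le> t"
    and up: "a * k * s \<le> b * j * t + a * k * e"
    and down: "b * j * t \<le> a * k * s + b * j * e"
  shows "\<bar>a / b - (j / k) * (t / s)\<bar> \<le> (2 + 1 / c) * ((j / k) * (t / s)) * (e / s)"
proof -
  define x where "x = (j / k) * (t / s)"
  define q where "q = a / b"
  have t: "0 < t"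
    using pos small mult_pos_pos[of c s] by linarith
  have x: "0 \<le> x"
    unfolding x_def using pos t by simp
  have "q * (s - e) \<le> x * s"
    using up pos unfolding q_def x_def by (simp add: field_simps)
  then have "q - x \<le> x * e / (s - e)"
    using pos small by (simp add: field_simps)
  also have "\<dots> \<le> x * e / (s / 2)"
    using pos small x by (intro divide_left_mono) simp_all
  also have "\<dots> = 2 * x * e / s"
    by simp
  finally have upper: "q - x \<le> 2 * x * (e / s)"
    by simp
  have "(j / k) * ((t - e) / s) \<le> q"
    using down pos unfolding q_def by (simp add: field_simps)
  moreover have "x - (j / k) * ((t - e) / s) = x * e / t"
    unfolding x_def using pos t by (simp add: field_simps)
  ultimately have "x - q \<le> x * e / t"
    by linarith
  also have "\<dots> \<le> x * e / (c * s)"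
    using pos small x t by (intro divide_left_mono) simp_all
  finally have lower: "x - q \<le> (1 / c) * x * (e / s)"
    by simp
  have "0 \<le> x * (e / s)" "0 \<le> (1 / c) * x * (e / s)"
    using x pos by simp_all
  moreover have "(2 + 1 / c) * x * (e / s) = 2 * x * (e / s) + (1 / c) * x * (e / s)"
    by (simp add: algebra_simps)
  ultimately show ?thesis
    using upper lower unfolding q_def[symmetric] x_def[symmetric] abs_le_iff by linarith
qed

lemma iff_zero_of_iff_Suc:
  assumes "\<forall>j<m. P (Suc j) \<longleftrightarrow> P j" and "j \<le> m"
  shows "P j \<longleftrightarrow> P 0"
  using assms by (induction j) auto

text \<open>Positivity spreads along i through the switching bounds, starting from the class
  of any graph with degree sequence dd.\<close>
lemma card_A_set_pos:
  assumes S: "S \<subseteq> {1..n}" and v: "v \<in> {1..n}" and dd_le: "\<forall>x\<in>{1..n}. dd x \<le> D"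
    and dS: "4 * D\<^sup>2 < sum dd S" and dT: "4 * D\<^sup>2 < sum dd ({1..n} - S)"
    and ne: "graphs_with_degrees n dd \<noteq> {}" and j: "j \<le> dd v"
  shows "0 < card (A_set n dd S v j)"
proof -
  define a where "a = (\<lambda>j. card (A_set n dd S v j))"
  have step: "0 < a (Suc j) \<longleftrightarrow> 0 < a j" if "j < dd v" for j
  proof
    assume "0 < a (Suc j)"
    then show "0 < a j"
      using card_A_set_switching_bounds(2)[OF S v dd_le, of j] dT unfolding a_def
      by (metis add_0 mult_0 mult_less_cancel1 not_gr0 not_le zero_less_Suc)
  next
    assume "0 < a j"
    then show "0 < a (Suc j)"
      using card_A_set_switching_bounds(1)[OF S v dd_le, of j] dS that unfolding a_def
      by (metis add_0 mult_0 mult_less_cancel1 not_gr0 not_le zero_less_diff)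
  qed
  obtain G where G: "G \<in> graphs_with_degrees n dd"
    using ne by blast
  define j0 where "j0 = card (S \<inter> neighbours G v)"
  have "G \<in> A_set n dd S v j0"
    using G by (simp add: A_set_def Collect_adjacent_eq_Int_neighbours j0_def)
  then have "0 < a j0"
    unfolding a_def using finite_A_set card_gt_0_iff by blast
  moreover have "j0 \<le> dd v"
    unfolding j0_def using card_neighbours_graphs_with_degrees[OF G v]
      finite_neighbours[OF graphs_with_degrees_simple[OF G]]
    by (metis card_mono inf_le2)
  ultimately show ?thesis
    using iff_zero_of_iff_Suc[of "dd v" "\<lambda>j. 0 < a j"] step j unfolding a_def by blast
qed

lemma card_A_set_ratio_bound:
  fixes dd :: "nat \<Rightarrow> nat" and c :: real
  assumes S: "S \<subseteq> {1..n}" and v: "v \<in> S" and i: "i < dd v"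
    and dd_le: "\<forall>x\<in>{1..n}. dd x \<le> D" and even: "even (sum dd {1..n})"
    and c: "0 < c" "c \<le> 1"
    and small: "8 * (real D)\<^sup>2 \<le> c * real (sum dd S)"
    and balance: "c * real (sum dd S) \<le> real (sum dd ({1..n} - S))"
  defines "x \<equiv> (real (i + 1) / real (dd v - i)) * (real (sum dd ({1..n} - S)) / real (sum dd S))"
  shows "\<bar>real (card (A_set n dd S v i)) / real (card (A_set n dd S v (i + 1))) - x\<bar>
    \<le> (8 + 4 / c) * x * ((real D)\<^sup>2 / real (sum dd S))"
proof -
  let ?T = "{1..n} - S"
  have v_n: "v \<in> {1..n}"
    using S v by blast
  have "1 \<le> D"
    using dd_le v_n i by fastforce
  then have D2: "1 \<le> (real D)\<^sup>2"
    by simp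
  have "c * real (sum dd S) \<le> real (sum dd S)"
    using c by (intro mult_left_le_one_le) (simp_all add: sum_nonneg)
  then have dS_real: "8 * (real D)\<^sup>2 \<le> real (sum dd S)"
    using small by linarith
  then have "real (4 * D\<^sup>2) < real (sum dd S)"
    using D2 by simp
  then have dS: "4 * D\<^sup>2 < sum dd S"
    by (simp only: of_nat_less_iff)
  have dT_real: "8 * (real D)\<^sup>2 \<le> real (sum dd ?T)"
    using small balance by simp
  then have "real (4 * D\<^sup>2) < real (sum dd ?T)"
    using D2 by simp
  then have dT: "4 * D\<^sup>2 < sum dd ?T"
    by (simp only: of_nat_less_iff)
  have "sum dd {1..n} = sum dd S + sum dd ?T"
    using S by (simp add: sum.subset_diff)
  moreover have "D \<le> D\<^sup>2"
    by (simp add: power2_eq_square)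
  ultimately have "3 * D\<^sup>2 + 4 * D < sum dd {1..n}"
    using dS dT by linarith
  then have ne: "graphs_with_degrees n dd \<noteq> {}"
    by (rule graphs_with_degrees_nonempty[OF dd_le even])
  note pos = card_A_set_pos[OF S v_n dd_le dS dT ne]
  define k where "k = dd v - i"
  note bounds = card_A_set_switching_bounds[OF S v_n dd_le, of i, folded k_def, THEN of_nat_mono]
  have "\<bar>real (card (A_set n dd S v i)) / real (card (A_set n dd S v (i + 1))) - x\<bar>
      \<le> (2 + 1 / c) * x * (4 * (real D)\<^sup>2 / real (sum dd S))"
    unfolding x_def k_def[symmetric]
  proof (rule ratio_estimate)
    show "0 < real (card (A_set n dd S v (i + 1)))"
      using pos[of "i + 1"] i by simp
    show "real (card (A_set n dd S v i)) * real k * real (sum dd S)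
        \<le> real (card (A_set n dd S v (i + 1))) * real (i + 1) * real (sum dd ?T)
          + real (card (A_set n dd S v i)) * real k * (4 * (real D)\<^sup>2)"
      using bounds(1) by (simp add: algebra_simps)
    show "real (card (A_set n dd S v (i + 1))) * real (i + 1) * real (sum dd ?T)
        \<le> real (card (A_set n dd S v i)) * real k * real (sum dd S)
          + real (card (A_set n dd S v (i + 1))) * real (i + 1) * (4 * (real D)\<^sup>2)"
      using bounds(2) by (simp add: algebra_simps)
  qed (use i c dS_real D2 balance k_def in simp_all)
  also have "\<dots> = (8 + 4 / c) * x * ((real D)\<^sup>2 / real (sum dd S))"
    by (simp add: field_simps)
  finally show ?thesis .
qed

lemma sq_le_of_main_assumption:
  fixes \<Delta> L \<gamma> \<delta> \<epsilon> s :: real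
  assumes "1 \<le> L" "0 < \<gamma>" "\<gamma> \<le> 1" "0 \<le> s" "\<Delta>\<^sup>2 * (L / \<gamma>) ^ 12 \<le> \<delta> * s" "\<delta> \<le> \<epsilon>"
  shows "\<Delta>\<^sup>2 \<le> \<epsilon> * s"
proof -
  have "1 \<le> L / \<gamma>"
    using assms by (simp add: le_divide_eq)
  then have "\<Delta>\<^sup>2 \<le> \<Delta>\<^sup>2 * (L / \<gamma>) ^ 12"
    by (simp add: mult_le_cancel_left1 one_le_power)
  also have "\<dots> \<le> \<epsilon> * s"
    using assms mult_right_mono[of \<delta> \<epsilon> s] by linarith
  finally show ?thesis .
qed

lemma switching_conditions_of_main_assumption:
  fixes dd :: "nat \<Rightarrow> nat" and c \<delta> :: real
  assumes dd_pos: "\<forall>i\<in>{1..n}. 1 \<le> dd i" and S: "S \<subseteq> {1..n}" and v: "v \<in> S" and n: "3 \<le> n"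
    and \<delta>: "\<delta> < c / 8" and c: "0 < c"
    and \<gamma>: "real (sum dd S) / real (sum dd {1..n}) < 1 - c"
    and main: "(real D)\<^sup>2 * (ln (real (sum dd {1..n}))
        / (real (sum dd S) / real (sum dd {1..n}))) ^ 12
      \<le> \<delta> * real (sum dd S)"
  shows "8 * (real D)\<^sup>2 \<le> c * real (sum dd S)"
    and "c * real (sum dd S) \<le> real (sum dd ({1..n} - S))"
    and "c \<le> 1"
proof -
  define M dS dSbar where "M = real (sum dd {1..n})" and "dS = real (sum dd S)"
    and "dSbar = real (sum dd ({1..n} - S))"
  have fin_S: "finite S"
    using finite_subset[OF S finite_atLeastAtMost] .
  have "dd v \<le> sum dd S" "1 \<le> dd v"
    using member_le_sum[OF v _ fin_S, of dd] dd_pos subsetD[OF S v] by auto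
  then have dS_pos: "1 \<le> dS"
    unfolding dS_def by (simp del: of_nat_sum)
  have "sum dd {1..n} = sum dd S + sum dd ({1..n} - S)"
    using sum.subset_diff[OF S finite_atLeastAtMost, of dd] by simp
  then have M_split: "M = dS + dSbar"
    unfolding M_def dS_def dSbar_def by (metis of_nat_add)
  have dSbar_nonneg: "0 \<le> dSbar"
    unfolding dSbar_def by (simp del: of_nat_sum)
  have "n \<le> sum dd {1..n}"
    using sum_mono[of "{1..n}" "\<lambda>_. 1" dd] dd_pos by simp
  then have "real n \<le> M"
    unfolding M_def by (simp only: of_nat_le_iff)
  moreover have "exp 1 \<le> real n"
    using exp_le n by simp
  ultimately have "exp 1 \<le> M"
    by linarith
  then have M_pos: "0 < M"
    using exp_gt_zero[of 1] by linarith
  then have "1 \<le> ln M"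
    using \<open>exp 1 \<le> M\<close> by (simp add: ln_ge_iff)
  moreover have \<gamma>_pos: "0 < dS / M" and "dS / M \<le> 1"
    using dS_pos dSbar_nonneg M_split M_pos by (simp_all add: divide_le_eq)
  ultimately have "(real D)\<^sup>2 \<le> c / 8 * dS"
    using main[folded M_def dS_def] \<delta> dS_pos
    by (intro sq_le_of_main_assumption[where L = "ln M" and \<gamma> = "dS / M" and \<delta> = \<delta>]) auto
  then show "8 * (real D)\<^sup>2 \<le> c * real (sum dd S)"
    unfolding dS_def by simp
  have "dS < (1 - c) * M"
    using \<gamma> M_pos unfolding M_def dS_def by (simp add: divide_less_eq)
  then have "c * dS < (1 - c) * dSbar"
    using M_split by (simp add: algebra_simps)
  moreover have "0 \<le> c * dSbar"
    using c dSbar_nonneg by simp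
  ultimately show "c * real (sum dd S) \<le> real (sum dd ({1..n} - S))"
    unfolding dS_def dSbar_def by (simp add: algebra_simps)
  show "c \<le> 1"
    using \<gamma> \<gamma>_pos unfolding M_def dS_def by linarith
qed

theorem lemma3p1:
  fixes d :: "nat \<Rightarrow> nat \<Rightarrow> nat" and S :: "nat \<Rightarrow> nat set"
    and \<delta> :: "nat \<Rightarrow> real" and c :: real
    and M \<Delta> dS dSbar :: "nat \<Rightarrow> real" and \<gamma> :: "nat \<Rightarrow> real"
  defines "M \<equiv> (\<lambda>n. real (\<Sum>i\<in>{1..n}. d n i))"
      and "\<Delta> \<equiv> (\<lambda>n. real (d n n))"
      and "dS \<equiv> (\<lambda>n. real (\<Sum>i\<in>S n. d n i))"
      and "dSbar \<equiv> (\<lambda>n. real (\<Sum>i\<in>{1..n} - S n. d n i))"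
      and "\<gamma> \<equiv> (\<lambda>n. dS n / M n)"
  assumes d_pos: "\<And>n i. i \<in> {1..n} \<Longrightarrow> 1 \<le> d n i"
    and d_mono: "\<And>n i j. 1 \<le> i \<Longrightarrow> i \<le> j \<Longrightarrow> j \<le> n \<Longrightarrow> d n i \<le> d n j"
    and d_even: "\<And>n. even (\<Sum>i\<in>{1..n}. d n i)"
    and S_sub: "\<And>n. S n \<subseteq> {1..n}"
    and \<delta>_pos: "\<forall>\<^sub>F n in sequentially. \<delta> n > 0"
    and \<delta>_lim: "\<delta> \<longlonglongrightarrow> 0"
    and \<delta>_inv: "(\<lambda>n. 1 / \<delta> n) \<in> O(\<lambda>n. ln (ln (M n)))"
    and main_ass: "\<forall>\<^sub>F n in sequentially.
        (\<Delta> n)\<^sup>2 * (ln (M n) / \<gamma> n) ^ 12 \<le> \<delta> n * dS n"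
    and c_pos: "c > 0"
    and \<gamma>_bound: "\<forall>\<^sub>F n in sequentially. \<gamma> n < 1 - c"
  shows "\<exists>C. \<forall>\<^sub>F n in sequentially. \<forall>v\<in>S n. \<forall>i<d n v.
     \<bar>real (card (A_set n (d n) (S n) v i)) / real (card (A_set n (d n) (S n) v (i + 1)))
        - (real (i + 1) / real (d n v - i)) * (dSbar n / dS n)\<bar>
     \<le> C * ((real (i + 1) / real (d n v - i)) * (dSbar n / dS n)) * ((\<Delta> n)\<^sup>2 / dS n)"
proof -
  have "\<forall>\<^sub>F n in sequentially. 3 \<le> n \<and> \<delta> n < c / 8 \<and> \<gamma> n < 1 - c
      \<and> (\<Delta> n)\<^sup>2 * (ln (M n) / \<gamma> n) ^ 12 \<le> \<delta> n * dS n"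
    using eventually_ge_at_top order_tendstoD(2)[OF \<delta>_lim, of "c / 8"] \<gamma>_bound main_ass c_pos
    by (intro eventually_conj) simp_all
  then show ?thesis
  proof (intro exI[of _ "8 + 4 / c"], elim eventually_mono, intro ballI allI impI)
    fix n v i
    assume H: "3 \<le> n \<and> \<delta> n < c / 8 \<and> \<gamma> n < 1 - c \<and> (\<Delta> n)\<^sup>2 * (ln (M n) / \<gamma> n) ^ 12 \<le> \<delta> n * dS n"
      and v: "v \<in> S n" and i: "i < d n v"
    have d_le: "\<forall>x\<in>{1..n}. d n x \<le> d n n"
      using d_mono by auto
    note conditions =
      switching_conditions_of_main_assumption[OF _ S_sub v _ _ c_pos, of "d n" "\<delta> n" "d n n"]
    from card_A_set_ratio_bound[OF S_sub v i d_le d_even c_pos conditions(3,1,2)]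
    show "\<bar>real (card (A_set n (d n) (S n) v i)) / real (card (A_set n (d n) (S n) v (i + 1)))
        - (real (i + 1) / real (d n v - i)) * (dSbar n / dS n)\<bar>
      \<le> (8 + 4 / c) * ((real (i + 1) / real (d n v - i)) * (dSbar n / dS n)) * ((\<Delta> n)\<^sup>2 / dS n)"
      using H d_pos unfolding M_def \<Delta>_def dS_def dSbar_def \<gamma>_def by simp
  qed
qed

end
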